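(* Let $n\ge 2$ be even. Then each of the $n$ cusps of $F_n$ lying above $\infty$ (the points $(X:Y:0)$ of $F_n$) is ramified in the cover $C_n\to F_n$ with ramification index exactly $2$. Equivalently, every point of $C_n$ above $\infty$ has ramification index $2n$ in the cover $C_n\to C_n/H_n\cong\mathbb{P}^1$.
   Context: $\Delta=\langle a,b\rangle\subset\mathrm{SL}(2,\mathbb{Z})$ with $a=\begin{pmatrix}1&2\\0&1\end{pmatrix}$, $b=\begin{pmatrix}1&0\\2&1\end{pmatrix}$; $H_n$ is the Heisenberg group of upper unitriangular $3\times3$ matrices over $\mathbb{Z}/n\mathbb{Z}$ generated by $a_H=I+E_{12}$, $b_H=I+E_{23}$, with center $Z_n$. $\phi:\Delta\to H_n$, $a\mapsto a_H$, $b\mapsto b_H$; $\psi:\Delta\to(\mathbb{Z}/n\mathbb{Z})^2$, $a\mapsto(1,0)$, $b\mapsto(0,1)$. $C_n$ (Heisenberg curve) and $F_n$ (Fermat curve) are the compactifications by cusps of $\ker\phi\backslash\mathbb{H}$ and $\ker\psi\backslash\mathbb{H}$; $C_n\to F_n$ is Galois with group $Z_n$ and $C_n\to\mathbb{P}^1=\Delta\backslash\mathbb{H}\cup\{\text{cusps}\}$ is Galois with group $H_n$. $F_n$ is identified with the projective curve $X^n+Y^n=Z^n$, the map $F_n\to\mathbb{P}^1$ being $(X:Y:Z)\mapsto(X/Z)^n$. *)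

theory Defs
  imports "HOL-Analysis.Analysis"
begin

text \<open>Letters of words in the generators a, b of Delta and their inverses.\<close>
datatype letter = LA | LAinv | LB | LBinv

type_synonym mat2 = "int^2^2"

definition matA :: mat2 where "matA = vector [vector [1, 2], vector [0, 1]]"
definition matAinv :: mat2 where "matAinv = vector [vector [1, -2], vector [0, 1]]"
definition matB :: mat2 where "matB = vector [vector [1, 0], vector [2, 1]]"
definition matBinv :: mat2 where "matBinv = vector [vector [1, 0], vector [-2, 1]]"

fun sl_of :: "letter \<Rightarrow> mat2" where
  "sl_of LA = matA" | "sl_of LAinv = matAinv" | "sl_of LB = matB" | "sl_of LBinv = matBinv"

definition eval_SL :: "letter list \<Rightarrow> mat2" where
  "eval_SL w = foldr (\<lambda>l M. sl_of l ** M) w (mat 1)"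

definition Delta :: "mat2 set" where "Delta = range eval_SL"

text \<open>Heisenberg group: (x,y,z) stands for the matrix I + x E12 + y E23 + z E13,
  entries taken modulo n.\<close>
definition heis_mult :: "int \<times> int \<times> int \<Rightarrow> int \<times> int \<times> int \<Rightarrow> int \<times> int \<times> int" where
  "heis_mult p q = (case p of (x, y, z) \<Rightarrow> case q of (x', y', z') \<Rightarrow>
      (x + x', y + y', z + z' + x * y'))"

fun heis_of :: "letter \<Rightarrow> int \<times> int \<times> int" where
  "heis_of LA = (1, 0, 0)" | "heis_of LAinv = (-1, 0, 0)"
| "heis_of LB = (0, 1, 0)" | "heis_of LBinv = (0, -1, 0)"

definition eval_H :: "letter list \<Rightarrow> int \<times> int \<times> int" where
  "eval_H w = foldr (\<lambda>l h. heis_mult (heis_of l) h) w (0, 0, 0)"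

definition heis_trivial :: "nat \<Rightarrow> int \<times> int \<times> int \<Rightarrow> bool" where
  "heis_trivial n h = (case h of (x, y, z) \<Rightarrow>
      x mod int n = 0 \<and> y mod int n = 0 \<and> z mod int n = 0)"

text \<open>ker phi, phi : Delta \<rightarrow> H_n, a \<mapsto> a_H, b \<mapsto> b_H (Delta is free on a, b).\<close>
definition ker_phi :: "nat \<Rightarrow> mat2 set" where
  "ker_phi n = {eval_SL w | w. heis_trivial n (eval_H w)}"

fun psi_of :: "letter \<Rightarrow> int \<times> int" where
  "psi_of LA = (1, 0)" | "psi_of LAinv = (-1, 0)"
| "psi_of LB = (0, 1)" | "psi_of LBinv = (0, -1)"

definition eval_psi :: "letter list \<Rightarrow> int \<times> int" where
  "eval_psi w = foldr (\<lambda>l p. (fst (psi_of l) + fst p, snd (psi_of l) + snd p)) w (0, 0)"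

definition ker_psi :: "nat \<Rightarrow> mat2 set" where
  "ker_psi n = {eval_SL w | w. fst (eval_psi w) mod int n = 0 \<and> snd (eval_psi w) mod int n = 0}"

text \<open>Stabilizer in G of the cusp (p:q) of P^1(Q), given by a primitive vector v = (p,q).\<close>
definition cusp_stab :: "mat2 set \<Rightarrow> int^2 \<Rightarrow> mat2 set" where
  "cusp_stab G v = {g \<in> G. g *v v = v \<or> g *v v = - v}"

definition subgroup_index :: "mat2 set \<Rightarrow> mat2 set \<Rightarrow> nat" where
  "subgroup_index A B = card ((\<lambda>g. (\<lambda>h. g ** h) ` B) ` A)"

text \<open>Ramification index at the cusp v of the cover Gamma'\H* \<rightarrow> Gamma\H*
  (Gamma' \<subseteq> Gamma, neither containing -I): index of cusp stabilizers.\<close>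
definition ram_index :: "mat2 set \<Rightarrow> mat2 set \<Rightarrow> int^2 \<Rightarrow> nat" where
  "ram_index G' G v = subgroup_index (cusp_stab G v) (cusp_stab G' v)"

text \<open>Primitive vector of the cusp 1 = (1:1), the cusp of Delta over \<infinity> \<in> P^1
  under the identification F_n = {X^n+Y^n=Z^n}, F_n \<rightarrow> P^1 being (X/Z)^n.\<close>
definition cusp_one :: "int^2" where "cusp_one = vector [1, 1]"

end

theory Submission
  imports Defs
begin

(* Ping-pong on four regions of Z^2 shows that Delta is free on a and b, so the Heisenberg image
  of a word only depends on the matrix it represents; Delta, ker psi and ker phi are the
  preimages of subgroups of the Heisenberg group.  The congruences satisfied by the elements of
  Delta force every element fixing the cusp 1 to be a power (a b^-1)^k, whose Heisenberg image is
  (k, -k, -k(k+1)/2).  For even n this is trivial mod n exactly when 2n divides k, while its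
  abelianisation vanishes mod n exactly when n divides k.  Stabilisers of the translated cusp
  g 1 are the conjugates by g, so the two ramification indices are [nZ : 2nZ] = 2 and
  [Z : 2nZ] = 2n. *)

definition mk2 :: "int \<Rightarrow> int \<Rightarrow> int \<Rightarrow> int \<Rightarrow> mat2" where
  "mk2 a b c d = vector [vector [a, b], vector [c, d]]"

lemma mk2_nth [simp]:
  "mk2 a b c d $1$1 = a" "mk2 a b c d $1$2 = b" "mk2 a b c d $2$1 = c" "mk2 a b c d $2$2 = d"
  by (simp_all add: mk2_def)

lemma mat2_eq_mk2: "(M::mat2) = mk2 (M$1$1) (M$1$2) (M$2$1) (M$2$2)"
  by (simp add: vec_eq_iff forall_2)

lemma mk2_eq_iff: "mk2 a b c d = mk2 a' b' c' d' \<longleftrightarrow> a = a' \<and> b = b' \<and> c = c' \<and> d = d'"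
  by (metis mk2_nth)

lemma mk2_mult: "mk2 a b c d ** mk2 e f g h = mk2 (a*e + b*g) (a*f + b*h) (c*e + d*g) (c*f + d*h)"
  by (simp add: vec_eq_iff forall_2 matrix_matrix_mult_def sum_2)

lemma mat_one_eq_mk2: "mat 1 = mk2 1 0 0 1"
  by (simp add: vec_eq_iff forall_2 mat_def)

lemma mk2_mult_vec: "mk2 a b c d *v v = vector [a * v$1 + b * v$2, c * v$1 + d * v$2]"
  by (simp add: vec_eq_iff forall_2 matrix_vector_mult_def sum_2)

lemma generators_eq_mk2:
  "matA = mk2 1 2 0 1" "matAinv = mk2 1 (-2) 0 1" "matB = mk2 1 0 2 1" "matBinv = mk2 1 0 (-2) 1"
  by (simp_all add: mk2_def matA_def matAinv_def matB_def matBinv_def)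

lemma cusp_one_nth [simp]: "cusp_one $ 1 = 1" "cusp_one $ 2 = 1"
  by (simp_all add: cusp_one_def)

lemma matrix_vector_mult_uminus: "(A::'a::ring_1^'n^'m) *v (- x) = - (A *v x)"
  using matrix_vector_mult_diff_distrib[of A 0 x] by simp

lemma conj_mult_conj:
  fixes g gi A B :: "'a::semiring_1^'n^'n"
  assumes "gi ** g = mat 1"
  shows "(g ** A ** gi) ** (g ** B ** gi) = g ** (A ** B) ** gi"
proof -
  have "(g ** A ** gi) ** (g ** B ** gi) = g ** A ** (gi ** g) ** B ** gi"
    by (simp add: matrix_mul_assoc)
  then show ?thesis using assms by (simp add: matrix_mul_assoc)
qed

lemma conj_cancel:
  fixes g gi A :: "'a::semiring_1^'n^'n"
  assumes "gi ** g = mat 1"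
  shows "gi ** (g ** A ** gi) ** g = A"
proof -
  have "gi ** (g ** A ** gi) ** g = (gi ** g) ** A ** (gi ** g)"
    by (simp add: matrix_mul_assoc)
  then show ?thesis using assms by simp
qed

fun letter_inv :: "letter \<Rightarrow> letter" where
  "letter_inv LA = LAinv" | "letter_inv LAinv = LA"
| "letter_inv LB = LBinv" | "letter_inv LBinv = LB"

lemma letter_inv_inv [simp]: "letter_inv (letter_inv l) = l"
  by (cases l) auto

definition inv_word :: "letter list \<Rightarrow> letter list" where
  "inv_word w = rev (map letter_inv w)"

lemma inv_word_inv_word [simp]: "inv_word (inv_word w) = w"
  by (simp add: inv_word_def rev_map comp_def)

lemma eval_SL_Nil [simp]: "eval_SL [] = mat 1"
  by (simp add: eval_SL_def)

lemma eval_SL_Cons: "eval_SL (l # w) = sl_of l ** eval_SL w"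
  by (simp add: eval_SL_def)

lemma eval_SL_append: "eval_SL (u @ v) = eval_SL u ** eval_SL v"
  by (induction u) (simp_all add: eval_SL_def matrix_mul_assoc)

lemma sl_of_letter_inv: "sl_of l ** sl_of (letter_inv l) = mat 1"
  by (cases l) (simp_all add: generators_eq_mk2 mk2_mult mat_one_eq_mk2)

lemma eval_SL_cancel: "eval_SL (l # letter_inv l # w) = eval_SL w"
  by (simp add: eval_SL_Cons matrix_mul_assoc sl_of_letter_inv)

lemma eval_SL_mult_inv_word: "eval_SL w ** eval_SL (inv_word w) = mat 1"
proof (induction w)
  case (Cons l w)
  have "eval_SL (l # w) ** eval_SL (inv_word (l # w))
      = sl_of l ** (eval_SL w ** eval_SL (inv_word w)) ** sl_of (letter_inv l)"
    by (simp add: inv_word_def eval_SL_append eval_SL_Cons matrix_mul_assoc)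
  with Cons show ?case by (simp add: sl_of_letter_inv)
qed (simp add: inv_word_def)

lemma eval_SL_inv_word_mult: "eval_SL (inv_word w) ** eval_SL w = mat 1"
  using eval_SL_mult_inv_word[of "inv_word w"] by simp

lemma heis_mult_assoc: "heis_mult (heis_mult p q) r = heis_mult p (heis_mult q r)"
  by (cases p; cases q; cases r) (simp add: heis_mult_def algebra_simps)

lemma heis_mult_zero [simp]: "heis_mult p (0, 0, 0) = p" "heis_mult (0, 0, 0) p = p"
  by (cases p; simp add: heis_mult_def)+

definition heis_inv :: "int \<times> int \<times> int \<Rightarrow> int \<times> int \<times> int" where
  "heis_inv p = (case p of (x, y, z) \<Rightarrow> (-x, -y, x * y - z))"

lemma heis_mult_inv_eq_zero_iff: "heis_mult p (heis_inv q) = (0, 0, 0) \<longleftrightarrow> p = q"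
  by (cases p; cases q) (auto simp: heis_mult_def heis_inv_def)

lemma heis_inv_mult: "heis_inv (heis_mult p q) = heis_mult (heis_inv q) (heis_inv p)"
  by (cases p; cases q) (simp add: heis_mult_def heis_inv_def algebra_simps)

lemma heis_inv_heis_of: "heis_inv (heis_of l) = heis_of (letter_inv l)"
  by (cases l) (simp_all add: heis_inv_def)

lemma heis_conj:
  "heis_mult (a, b, c) (heis_mult (x, y, z) (heis_inv (a, b, c))) = (x, y, z + a * y - x * b)"
  by (simp add: heis_mult_def heis_inv_def algebra_simps)

lemma eval_H_Nil [simp]: "eval_H [] = (0, 0, 0)"
  by (simp add: eval_H_def)

lemma eval_H_Cons: "eval_H (l # w) = heis_mult (heis_of l) (eval_H w)"
  by (simp add: eval_H_def)

lemma eval_H_append: "eval_H (u @ v) = heis_mult (eval_H u) (eval_H v)"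
  by (induction u) (simp_all add: eval_H_Cons heis_mult_assoc)

lemma eval_H_inv_word: "eval_H (inv_word w) = heis_inv (eval_H w)"
proof (induction w)
  case Nil
  then show ?case by (simp add: inv_word_def heis_inv_def)
next
  case (Cons l w)
  then show ?case
    by (simp add: inv_word_def eval_H_append eval_H_Cons heis_inv_mult heis_inv_heis_of)
qed

lemma eval_H_cancel: "eval_H (l # letter_inv l # w) = eval_H w"
proof -
  have "heis_mult (heis_of l) (heis_inv (heis_of l)) = (0, 0, 0)"
    by (simp add: heis_mult_inv_eq_zero_iff)
  then show ?thesis
    by (simp add: eval_H_Cons heis_inv_heis_of flip: heis_mult_assoc)
qed

lemma eval_psi_eq_eval_H: "eval_psi w = (fst (eval_H w), fst (snd (eval_H w)))"
proof (induction w)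
  case (Cons l w)
  then show ?case
    by (cases l; cases "eval_H w") (simp_all add: eval_psi_def eval_H_Cons heis_mult_def)
qed (simp add: eval_psi_def)

section \<open>Freeness of Delta\<close>

fun reduced_word :: "letter list \<Rightarrow> bool" where
  "reduced_word (x # y # w) \<longleftrightarrow> y \<noteq> letter_inv x \<and> reduced_word (y # w)"
| "reduced_word _ \<longleftrightarrow> True"

lemma not_reduced_word_split: "\<not> reduced_word w \<Longrightarrow> \<exists>u l v. w = u @ l # letter_inv l # v"
proof (induction w rule: reduced_word.induct)
  case (1 x y w)
  show ?case
  proof (cases "y = letter_inv x")
    case True
    then show ?thesis by (metis append_Nil)
  next
    case False
    with 1 obtain u l v where "y # w = u @ l # letter_inv l # v" by auto
    then have "x # y # w = (x # u) @ l # letter_inv l # v" by simp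
    then show ?thesis by blast
  qed
qed auto

fun pingpong_region :: "letter \<Rightarrow> int^2 \<Rightarrow> bool" where
  "pingpong_region LA p \<longleftrightarrow> (0 < p$2 \<and> p$2 < p$1) \<or> (p$1 < p$2 \<and> p$2 < 0)"
| "pingpong_region LAinv p \<longleftrightarrow> (0 < p$2 \<and> p$2 < - p$1) \<or> (- p$1 < p$2 \<and> p$2 < 0)"
| "pingpong_region LB p \<longleftrightarrow> (0 < p$1 \<and> p$1 < p$2) \<or> (p$2 < p$1 \<and> p$1 < 0)"
| "pingpong_region LBinv p \<longleftrightarrow> (0 < p$1 \<and> p$1 < - p$2) \<or> (- p$2 < p$1 \<and> p$1 < 0)"

lemma pingpong_region_sl_of:
  "pingpong_region q p \<Longrightarrow> q \<noteq> letter_inv l \<Longrightarrow> pingpong_region l (sl_of l *v p)"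
  by (cases l; cases q) (auto simp: generators_eq_mk2 mk2_mult_vec)

lemma pingpong_region_unique: "pingpong_region l p \<Longrightarrow> pingpong_region l' p \<Longrightarrow> l = l'"
  by (cases l; cases l') auto

lemma pingpong_region_nonempty: "\<exists>p. pingpong_region l p"
proof (cases l)
  case LA then show ?thesis by (intro exI[of _ "vector [2, 1]"]) simp
next
  case LAinv then show ?thesis by (intro exI[of _ "vector [-2, 1]"]) simp
next
  case LB then show ?thesis by (intro exI[of _ "vector [1, 2]"]) simp
next
  case LBinv then show ?thesis by (intro exI[of _ "vector [-1, 2]"]) simp
qed

lemma pingpong_region_eval_SL:
  assumes "reduced_word (l # w)" and "pingpong_region q p" and "q \<noteq> letter_inv (last (l # w))"
  shows "pingpong_region l (eval_SL (l # w) *v p)"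
  using assms
proof (induction w arbitrary: l)
  case Nil
  then show ?case by (simp add: pingpong_region_sl_of eval_SL_Cons)
next
  case (Cons l' w)
  then have "pingpong_region l' (eval_SL (l' # w) *v p)" and "l' \<noteq> letter_inv l" by auto
  then have "pingpong_region l (sl_of l *v (eval_SL (l' # w) *v p))"
    by (metis pingpong_region_sl_of)
  then show ?case by (simp add: eval_SL_Cons matrix_vector_mul_assoc)
qed

lemma eval_SL_reduced_word_neq_one:
  assumes "reduced_word w" and "w \<noteq> []"
  shows "eval_SL w \<noteq> mat 1"
proof
  assume one: "eval_SL w = mat 1"
  obtain l w' where w: "w = l # w'" using assms(2) by (cases w) auto
  have "\<exists>q. q \<noteq> letter_inv (last w) \<and> q \<noteq> l"
    by (cases "letter_inv (last w)"; cases l) auto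
  then obtain q where "q \<noteq> letter_inv (last w)" and "q \<noteq> l" by blast
  moreover obtain p where "pingpong_region q p"
    using pingpong_region_nonempty by blast
  \<comment> \<open>w moves p from the region of q into the region of l \<noteq> q, so w does not fix p\<close>
  ultimately show False
    using pingpong_region_eval_SL[of l w' q p] assms(1) one w pingpong_region_unique by force
qed

lemma eval_H_eq_zero_if_eval_SL_eq_one: "eval_SL w = mat 1 \<Longrightarrow> eval_H w = (0, 0, 0)"
proof (induction "length w" arbitrary: w rule: less_induct)
  case less
  show ?case
  proof (cases "reduced_word w")
    case True
    then show ?thesis using eval_SL_reduced_word_neq_one less.prems by fastforce
  next
    case False
    then obtain u l v where w: "w = u @ l # letter_inv l # v" using not_reduced_word_split by blast
    then have "eval_SL (u @ v) = mat 1"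
      using less.prems by (simp add: eval_SL_append eval_SL_cancel)
    then have "eval_H (u @ v) = (0, 0, 0)" using less w by force
    then show ?thesis using w by (simp add: eval_H_append eval_H_cancel)
  qed
qed

lemma eval_H_eq_if_eval_SL_eq:
  assumes "eval_SL w = eval_SL w'"
  shows "eval_H w = eval_H w'"
proof -
  have "eval_SL (w @ inv_word w') = mat 1"
    using assms eval_SL_mult_inv_word[of w'] by (simp add: eval_SL_append)
  from eval_H_eq_zero_if_eval_SL_eq_one[OF this]
  have "heis_mult (eval_H w) (heis_inv (eval_H w')) = (0, 0, 0)"
    by (simp add: eval_H_append eval_H_inv_word)
  then show ?thesis by (simp add: heis_mult_inv_eq_zero_iff)
qed

section \<open>Preimages of normal subgroups of the Heisenberg group\<close>

definition word_subgroup :: "(int \<times> int \<times> int \<Rightarrow> bool) \<Rightarrow> mat2 set" where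
  "word_subgroup P = {eval_SL w | w. P (eval_H w)}"

definition heis_normal :: "(int \<times> int \<times> int \<Rightarrow> bool) \<Rightarrow> bool" where
  "heis_normal P \<longleftrightarrow> (\<forall>p q. P p \<longrightarrow> P (heis_mult q (heis_mult p (heis_inv q))))"

lemma word_subgroupI: "P (eval_H w) \<Longrightarrow> eval_SL w \<in> word_subgroup P"
  by (auto simp: word_subgroup_def)

lemma word_subgroup_conj:
  assumes "heis_normal P" and "h \<in> word_subgroup P"
  shows "eval_SL u ** h ** eval_SL (inv_word u) \<in> word_subgroup P"
proof -
  obtain w where h: "h = eval_SL w" and "P (eval_H w)"
    using assms(2) by (auto simp: word_subgroup_def)
  then have "P (heis_mult (eval_H u) (heis_mult (eval_H w) (heis_inv (eval_H u))))"
    using assms(1) unfolding heis_normal_def by blast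
  then have "P (eval_H (u @ w @ inv_word u))"
    by (simp add: eval_H_append eval_H_inv_word)
  moreover have "eval_SL (u @ w @ inv_word u) = eval_SL u ** h ** eval_SL (inv_word u)"
    by (simp add: h eval_SL_append matrix_mul_assoc)
  ultimately show ?thesis by (metis word_subgroupI)
qed

lemma Delta_eq_word_subgroup: "Delta = word_subgroup (\<lambda>_. True)"
  by (auto simp: Delta_def word_subgroup_def)

lemma ker_phi_eq_word_subgroup: "ker_phi n = word_subgroup (heis_trivial n)"
  by (simp add: ker_phi_def word_subgroup_def)

lemma ker_psi_eq_word_subgroup:
  "ker_psi n = word_subgroup (\<lambda>(x, y, z). int n dvd x \<and> int n dvd y)"
  by (simp add: ker_psi_def word_subgroup_def eval_psi_eq_eval_H split_beta dvd_eq_mod_eq_0)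

lemma heis_normal_True: "heis_normal (\<lambda>_. True)"
  by (simp add: heis_normal_def)

lemma heis_normal_heis_trivial: "heis_normal (heis_trivial n)"
  unfolding heis_normal_def
  by (auto simp: heis_conj heis_trivial_def simp flip: dvd_eq_mod_eq_0)

lemma heis_normal_abelianisation: "heis_normal (\<lambda>(x, y, z). int n dvd x \<and> int n dvd y)"
  unfolding heis_normal_def by (auto simp: heis_conj)

section \<open>Stabilisers of the cusps above infinity\<close>

definition delta_congruence :: "mat2 \<Rightarrow> bool" where
  "delta_congruence M \<longleftrightarrow> M$1$1 * M$2$2 - M$1$2 * M$2$1 = 1
     \<and> M$1$1 mod 4 = 1 \<and> M$2$2 mod 4 = 1 \<and> even (M$1$2) \<and> even (M$2$1)"

lemma delta_congruence_eval_SL: "delta_congruence (eval_SL w)"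
proof (induction w)
  case Nil
  then show ?case by (simp add: delta_congruence_def mat_one_eq_mk2)
next
  case (Cons l w)
  obtain a b c d where M: "eval_SL w = mk2 a b c d" using mat2_eq_mk2 by blast
  have "a*d - b*c = 1" "a mod 4 = 1" "d mod 4 = 1" "even b" "even c"
    using Cons M by (simp_all add: delta_congruence_def)
  then show ?case
    by (cases l) (simp_all add: eval_SL_Cons M generators_eq_mk2 mk2_mult delta_congruence_def
        algebra_simps, presburger+)
qed

(* (a b^-1)^k = (-1)^k (I + 2k N) with N = [[1,-1],[1,-1]], since a b^-1 = -(I + 2N) and N^2 = 0 *)
definition ab_pow :: "int \<Rightarrow> mat2" where
  "ab_pow k = (let s = (if even k then 1 else -1)
     in mk2 (s * (1 + 2*k)) (s * (-2*k)) (s * (2*k)) (s * (1 - 2*k)))"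

lemma ab_pow_add: "ab_pow j ** ab_pow k = ab_pow (j + k)"
  by (cases "even j"; cases "even k") (simp_all add: ab_pow_def mk2_mult mk2_eq_iff algebra_simps)

lemma inj_ab_pow: "inj ab_pow"
proof (rule injI)
  fix j k
  assume "ab_pow j = ab_pow k"
  then show "j = k" by (cases "even j"; cases "even k") (auto simp: ab_pow_def mk2_eq_iff)
qed

lemma ab_pow_cusp_one: "ab_pow k *v cusp_one = cusp_one \<or> ab_pow k *v cusp_one = - cusp_one"
  by (cases "even k") (simp_all add: ab_pow_def mk2_mult_vec vec_eq_iff forall_2)

lemma ab_pow_succ: "ab_pow (k + 1) = matA ** (matBinv ** ab_pow k)"
  using ab_pow_add[of 1 k]
  by (simp add: matrix_mul_assoc generators_eq_mk2 mk2_mult ab_pow_def add.commute)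

lemma ab_pow_pred: "ab_pow (k - 1) = matB ** (matAinv ** ab_pow k)"
  using ab_pow_add[of "-1" k]
  by (simp add: matrix_mul_assoc generators_eq_mk2 mk2_mult ab_pow_def)

(* M = +-(I + 2jN) by the determinant; the diagonal entry 1 mod 4 decides the sign. *)
lemma delta_congruence_fixing_cusp_one:
  assumes "delta_congruence M" and "M *v cusp_one = cusp_one \<or> M *v cusp_one = - cusp_one"
  shows "\<exists>k. M = ab_pow k"
proof -
  obtain p q r d where M: "M = mk2 p q r d" using mat2_eq_mk2 by blast
  have h: "p*d - q*r = 1" "p mod 4 = 1" "even q"
    using assms(1) M by (simp_all add: delta_congruence_def)
  obtain t where t: "q = 2 * t" using h(3) by blast
  from assms(2) consider "q = 1 - p" "r = 1 - d" | "q = -1 - p" "r = -1 - d"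
    by (auto simp: M mk2_mult_vec vec_eq_iff forall_2)
  then show ?thesis
  proof cases
    case 1
    with h(1) have "p + d = 2" by (simp add: algebra_simps)
    moreover have "even t" using h(2) t 1 by presburger
    ultimately have "M = ab_pow (-t)" using M t 1 by (simp add: ab_pow_def mk2_eq_iff)
    then show ?thesis by blast
  next
    case 2
    with h(1) have "p + d = -2" by (simp add: algebra_simps)
    moreover have "odd t" using h(2) t 2 by presburger
    ultimately have "M = ab_pow t" using M t 2 by (simp add: ab_pow_def mk2_eq_iff)
    then show ?thesis by blast
  qed
qed

definition heis_ab_pow :: "int \<Rightarrow> int \<times> int \<times> int" where
  "heis_ab_pow k = (k, -k, - (k * (k + 1) div 2))"

lemma heis_ab_pow_succ:
  "heis_ab_pow (k + 1) = heis_mult (heis_of LA) (heis_mult (heis_of LBinv) (heis_ab_pow k))"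
proof -
  have "(k + 1) * (k + 1 + 1) = k * (k + 1) + 2 * (k + 1)" by algebra
  then show ?thesis by (simp add: heis_ab_pow_def heis_mult_def)
qed

lemma heis_ab_pow_pred:
  "heis_ab_pow (k - 1) = heis_mult (heis_of LB) (heis_mult (heis_of LAinv) (heis_ab_pow k))"
proof -
  have "k * (k + 1) = (k - 1) * (k - 1 + 1) + 2 * k" by algebra
  then show ?thesis by (simp add: heis_ab_pow_def heis_mult_def)
qed

lemma ab_pow_word: "\<exists>w. eval_SL w = ab_pow k \<and> eval_H w = heis_ab_pow k"
proof (induction k rule: int_induct[where k = 0])
  case base
  have "ab_pow 0 = mat 1" by (simp add: ab_pow_def mat_one_eq_mk2)
  then show ?case by (intro exI[of _ "[]"]) (simp add: heis_ab_pow_def)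
next
  case (step1 k)
  then obtain w where "eval_SL w = ab_pow k" "eval_H w = heis_ab_pow k" by blast
  then show ?case
    by (intro exI[of _ "LA # LBinv # w"])
      (simp add: eval_SL_Cons eval_H_Cons ab_pow_succ heis_ab_pow_succ)
next
  case (step2 k)
  then obtain w where "eval_SL w = ab_pow k" "eval_H w = heis_ab_pow k" by blast
  then show ?case
    by (intro exI[of _ "LB # LAinv # w"])
      (simp add: eval_SL_Cons eval_H_Cons ab_pow_pred heis_ab_pow_pred)
qed

lemma cusp_stab_word_subgroup_cusp_one:
  "cusp_stab (word_subgroup P) cusp_one = ab_pow ` {k. P (heis_ab_pow k)}"
proof
  show "cusp_stab (word_subgroup P) cusp_one \<subseteq> ab_pow ` {k. P (heis_ab_pow k)}"
  proof
    fix h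
    assume "h \<in> cusp_stab (word_subgroup P) cusp_one"
    then obtain w where h: "h = eval_SL w" and P: "P (eval_H w)"
      and stab: "h *v cusp_one = cusp_one \<or> h *v cusp_one = - cusp_one"
      by (auto simp: cusp_stab_def word_subgroup_def)
    obtain k where k: "h = ab_pow k"
      using delta_congruence_fixing_cusp_one[OF _ stab] delta_congruence_eval_SL h by blast
    obtain w' where "eval_SL w' = ab_pow k" and "eval_H w' = heis_ab_pow k"
      using ab_pow_word by blast
    then have "eval_H w = heis_ab_pow k"
      using eval_H_eq_if_eval_SL_eq h k by metis
    with P k show "h \<in> ab_pow ` {k. P (heis_ab_pow k)}" by (intro image_eqI[of _ _ k]) simp_all
  qed
  show "ab_pow ` {k. P (heis_ab_pow k)} \<subseteq> cusp_stab (word_subgroup P) cusp_one"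
  proof clarify
    fix k
    assume "P (heis_ab_pow k)"
    moreover obtain w where "eval_SL w = ab_pow k" and "eval_H w = heis_ab_pow k"
      using ab_pow_word by blast
    ultimately have "ab_pow k \<in> word_subgroup P" by (metis word_subgroupI)
    then show "ab_pow k \<in> cusp_stab (word_subgroup P) cusp_one"
      using ab_pow_cusp_one by (simp add: cusp_stab_def)
  qed
qed

lemma cusp_stab_conj:
  assumes inv: "g ** gi = mat 1" "gi ** g = mat 1"
    and closed: "\<And>h. h \<in> G \<Longrightarrow> g ** h ** gi \<in> G" "\<And>h. h \<in> G \<Longrightarrow> gi ** h ** g \<in> G"
  shows "cusp_stab G (g *v v) = (\<lambda>h. g ** h ** gi) ` cusp_stab G v"
proof
  show "cusp_stab G (g *v v) \<subseteq> (\<lambda>h. g ** h ** gi) ` cusp_stab G v"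
  proof
    fix h
    assume h: "h \<in> cusp_stab G (g *v v)"
    define h0 where "h0 = gi ** h ** g"
    have "h0 *v v = gi *v (h *v (g *v v))" and "gi *v (g *v v) = v"
      using inv(2) by (simp_all add: h0_def matrix_vector_mul_assoc matrix_mul_assoc)
    then have "h0 *v v = v \<or> h0 *v v = - v"
      using h by (auto simp: cusp_stab_def matrix_vector_mult_uminus)
    moreover have "h0 \<in> G" using h closed(2) by (simp add: cusp_stab_def h0_def)
    moreover have "h = g ** h0 ** gi" using conj_cancel[OF inv(1)] by (simp add: h0_def)
    ultimately show "h \<in> (\<lambda>h. g ** h ** gi) ` cusp_stab G v" by (auto simp: cusp_stab_def)
  qed
  show "(\<lambda>h. g ** h ** gi) ` cusp_stab G v \<subseteq> cusp_stab G (g *v v)"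
  proof clarify
    fix h
    assume h: "h \<in> cusp_stab G v"
    have "g ** h ** gi ** g = g ** h"
      by (metis inv(2) matrix_mul_assoc matrix_mul_rid)
    then have "(g ** h ** gi) *v (g *v v) = g *v (h *v v)"
      by (simp add: matrix_vector_mul_assoc)
    then show "g ** h ** gi \<in> cusp_stab G (g *v v)"
      using h closed(1) by (auto simp: cusp_stab_def matrix_vector_mult_uminus)
  qed
qed

lemma cusp_stab_word_subgroup:
  assumes "heis_normal P"
  shows "cusp_stab (word_subgroup P) (eval_SL u *v cusp_one)
    = (\<lambda>k. eval_SL u ** ab_pow k ** eval_SL (inv_word u)) ` {k. P (heis_ab_pow k)}"
proof -
  have "cusp_stab (word_subgroup P) (eval_SL u *v cusp_one)
      = (\<lambda>h. eval_SL u ** h ** eval_SL (inv_word u)) ` cusp_stab (word_subgroup P) cusp_one"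
    using word_subgroup_conj[OF assms, of _ u] word_subgroup_conj[OF assms, of _ "inv_word u"]
    by (intro cusp_stab_conj) (simp_all add: eval_SL_mult_inv_word eval_SL_inv_word_mult)
  then show ?thesis by (simp add: cusp_stab_word_subgroup_cusp_one image_image)
qed

lemma even_dvd_triangle_iff:
  fixes n k :: int
  assumes "even n"
  shows "n dvd k \<and> n dvd k * (k + 1) div 2 \<longleftrightarrow> 2 * n dvd k"
proof
  assume dvd: "n dvd k \<and> n dvd k * (k + 1) div 2"
  obtain r where r: "n = 2 * r" using assms by blast
  obtain t where t: "k = n * t" using dvd by blast
  have "k * (k + 1) div 2 = r * (t * (k + 1))" by (simp add: r t)
  then have "2 * r dvd r * (t * (k + 1))" using dvd r by simp
  then have "r = 0 \<or> 2 dvd t * (k + 1)" by (cases "r = 0") simp_all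
  moreover have "odd (k + 1)" using r t by simp
  ultimately show "2 * n dvd k" using r t by auto
next
  assume "2 * n dvd k"
  then obtain t where t: "k = 2 * n * t" by blast
  then have "k * (k + 1) div 2 = n * (t * (k + 1))" by simp
  with t show "n dvd k \<and> n dvd k * (k + 1) div 2" by simp
qed

lemma heis_trivial_heis_ab_pow: "even n \<Longrightarrow> heis_trivial n (heis_ab_pow k) \<longleftrightarrow> 2 * int n dvd k"
  using even_dvd_triangle_iff[of "int n" k]
  by (auto simp: heis_trivial_def heis_ab_pow_def simp flip: dvd_eq_mod_eq_0 dest: dvd_mult_right)

section \<open>Indices in an infinite cyclic group\<close>

lemma card_image_eq_if_same_fibres:
  assumes "\<And>x y. x \<in> A \<Longrightarrow> y \<in> A \<Longrightarrow> f x = f y \<longleftrightarrow> g x = g y"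
  shows "card (f ` A) = card (g ` A)"
proof -
  define h where "h y = f (inv_into A g y)" for y
  have "f x = h (g x)" if "x \<in> A" for x
    using that assms[of x "inv_into A g (g x)"] by (simp add: h_def inv_into_into f_inv_into_f)
  then have "f ` A = h ` g ` A" by (simp add: image_image)
  moreover have "inj_on h (g ` A)"
    by (rule inj_onI) (use assms in \<open>auto simp: h_def inv_into_into f_inv_into_f\<close>)
  ultimately show ?thesis by (simp add: card_image)
qed

lemma range_mod_int:
  fixes m :: int
  assumes "m > 0"
  shows "range (\<lambda>s. s mod m) = {0..<m}"
proof
  show "range (\<lambda>s. s mod m) \<subseteq> {0..<m}" using assms by auto
  show "{0..<m} \<subseteq> range (\<lambda>s. s mod m)"
  proof
    fix t
    assume "t \<in> {0..<m}"
    then have "t = t mod m" by simp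
    then show "t \<in> range (\<lambda>s. s mod m)" by blast
  qed
qed

lemma cosets_dvd_eq_iff: "{k. m dvd k - i} = {k. m dvd k - j} \<longleftrightarrow> (m::int) dvd i - j"
proof
  assume "{k. m dvd k - i} = {k. m dvd k - j}"
  moreover have "i \<in> {k. m dvd k - i}" by simp
  ultimately show "m dvd i - j" by simp
next
  assume "m dvd i - j"
  then have "m dvd k - i \<longleftrightarrow> m dvd k - j" for k
    using dvd_diff[of m "k - j" "i - j"] dvd_add[of m "k - i" "i - j"] by fastforce
  then show "{k. m dvd k - i} = {k. m dvd k - j}" by simp
qed

lemma card_cosets_multiples:
  fixes F :: "int \<Rightarrow> 'a" and mult :: "'a \<Rightarrow> 'a \<Rightarrow> 'a"
  assumes hom: "\<And>a b. mult (F a) (F b) = F (a + b)" and "inj F"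
    and "d \<noteq> 0" and m: "m = d * int e" and "e > 0"
  shows "card ((\<lambda>x. mult x ` F ` {k. m dvd k}) ` F ` {k. d dvd k}) = e"
proof -
  have coset: "mult (F i) ` F ` {k. m dvd k} = F ` {k. m dvd k - i}" for i
  proof -
    have "(+) i ` {k. m dvd k} = {k. m dvd k - i}"
      by (auto intro: image_eqI[of _ _ "_ - i"])
    then show ?thesis by (simp add: hom image_image flip: image_image[of F "(+) i"])
  qed
  have same_coset: "F ` {k. m dvd k - i} = F ` {k. m dvd k - j} \<longleftrightarrow> m dvd i - j" for i j
    using \<open>inj F\<close> by (simp add: inj_image_eq_iff cosets_dvd_eq_iff)
  have "F ` {k. d dvd k} = (\<lambda>s. F (d * s)) ` UNIV" by auto
  then have "(\<lambda>x. mult x ` F ` {k. m dvd k}) ` F ` {k. d dvd k}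
      = (\<lambda>s. mult (F (d * s)) ` F ` {k. m dvd k}) ` UNIV"
    by (simp only: image_image)
  also have "\<dots> = (\<lambda>s. F ` {k. m dvd k - d * s}) ` UNIV"
    by (simp only: coset)
  finally have cosets: "(\<lambda>x. mult x ` F ` {k. m dvd k}) ` F ` {k. d dvd k}
      = (\<lambda>s. F ` {k. m dvd k - d * s}) ` UNIV" .
  have "card ((\<lambda>s. F ` {k. m dvd k - d * s}) ` UNIV) = card (range (\<lambda>s. s mod int e))"
  proof (rule card_image_eq_if_same_fibres)
    fix s t
    have "m dvd d * s - d * t \<longleftrightarrow> int e dvd s - t"
      using \<open>d \<noteq> 0\<close> by (simp add: m flip: right_diff_distrib)
    then show "F ` {k. m dvd k - d * s} = F ` {k. m dvd k - d * t}
        \<longleftrightarrow> s mod int e = t mod int e"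
      by (simp add: same_coset mod_eq_dvd_iff)
  qed
  then show ?thesis
    using \<open>e > 0\<close> by (simp add: cosets range_mod_int)
qed

theorem mainTheorem6:
  fixes n :: nat and g :: mat2
  assumes "n \<ge> 2" and "even n" and "g \<in> Delta"
  shows "ram_index (ker_phi n) (ker_psi n) (g *v cusp_one) = 2
       \<and> ram_index (ker_phi n) Delta (g *v cusp_one) = 2 * n"
proof -
  obtain u where g: "g = eval_SL u" using assms(3) by (auto simp: Delta_def)
  define F where "F k = g ** ab_pow k ** eval_SL (inv_word u)" for k
  have gi_g: "eval_SL (inv_word u) ** g = mat 1" by (simp add: g eval_SL_inv_word_mult)
  have F_hom: "F a ** F b = F (a + b)" for a b
    using conj_mult_conj[OF gi_g] by (simp add: F_def ab_pow_add)
  have "inj F"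
    by (rule injI) (metis F_def conj_cancel[OF gi_g] inj_ab_pow injD)
  have stab: "cusp_stab (word_subgroup P) (g *v cusp_one) = F ` {k. P (heis_ab_pow k)}"
    if "heis_normal P" for P
    using cusp_stab_word_subgroup[OF that] by (simp add: g F_def)
  have "cusp_stab Delta (g *v cusp_one) = F ` {k. 1 dvd k}"
    using stab[OF heis_normal_True] by (simp add: Delta_eq_word_subgroup)
  moreover have "cusp_stab (ker_psi n) (g *v cusp_one) = F ` {k. int n dvd k}"
    using stab[OF heis_normal_abelianisation]
    by (simp add: ker_psi_eq_word_subgroup heis_ab_pow_def)
  moreover have "cusp_stab (ker_phi n) (g *v cusp_one) = F ` {k. 2 * int n dvd k}"
    using stab[OF heis_normal_heis_trivial]
    by (simp add: ker_phi_eq_word_subgroup heis_trivial_heis_ab_pow assms(2))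
  moreover have "card ((\<lambda>x. (**) x ` F ` {k. 2 * int n dvd k}) ` F ` {k. int n dvd k}) = 2"
    by (rule card_cosets_multiples[OF F_hom \<open>inj F\<close>]) (use assms(1) in simp_all)
  moreover have "card ((\<lambda>x. (**) x ` F ` {k. 2 * int n dvd k}) ` F ` {k. 1 dvd k}) = 2 * n"
    by (rule card_cosets_multiples[OF F_hom \<open>inj F\<close>]) (use assms(1) in simp_all)
  ultimately show ?thesis by (simp add: ram_index_def subgroup_index_def)
qed

end
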